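(* Let $a,p>0$, $g(r;a,p)=a\,e^{-pr^2}$, and $I_{n,k,l}=\int_0^\infty f^k(r)\,g^l(r;a,p)\,r^{2n+1}dr$. If $f$ satisfies condition (1), then $I_{n,k,l}$ exists for all $n,k\in\mathbb{N}_0$ and all $l\in\mathbb{N}$. Moreover, if $f$ satisfies condition (1) and $c_{2n}$ exists, then $I_{n,k,0}$ exists for all $k\in\mathbb{N}$.
   Context: $f:[0,\infty)\to\mathbb{R}$; $c_n=2\pi\int_0^\infty f(r)\,r^{n+1}dr$. Condition (1): there is a constant $F$ with $0\le f(r)\le F$ for all $r\ge0$, $c_0$ exists and $c_0>0$. $\mathbb{N}=\{1,2,\dots\}$, $\mathbb{N}_0=\{0,1,2,\dots\}$. *)

theory Defs
  imports "HOL-Analysis.Analysis"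
begin

definition c_exists :: "(real \<Rightarrow> real) \<Rightarrow> nat \<Rightarrow> bool" where
  "c_exists f n \<longleftrightarrow> set_integrable lborel {0..} (\<lambda>r. f r * r ^ (n + 1))"

definition c_coef :: "(real \<Rightarrow> real) \<Rightarrow> nat \<Rightarrow> real" where
  "c_coef f n = 2 * pi * (LINT r:{0..}|lborel. f r * r ^ (n + 1))"

definition cond1 :: "(real \<Rightarrow> real) \<Rightarrow> bool" where
  "cond1 f \<longleftrightarrow> (\<exists>F. \<forall>r\<ge>0. 0 \<le> f r \<and> f r \<le> F) \<and> c_exists f 0 \<and> c_coef f 0 > 0"

definition gfun :: "real \<Rightarrow> real \<Rightarrow> real \<Rightarrow> real" where
  "gfun a p r = a * exp (- p * r\<^sup>2)"

definition I_exists :: "(real \<Rightarrow> real) \<Rightarrow> real \<Rightarrow> real \<Rightarrow> nat \<Rightarrow> nat \<Rightarrow> nat \<Rightarrow> bool" where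
  "I_exists f a p n k l \<longleftrightarrow>
     set_integrable lborel {0..} (\<lambda>r. f r ^ k * gfun a p r ^ l * r ^ (2 * n + 1))"

end

(* On [0,inf) the integrand f^k g^l r^(2n+1) is a power of f times either a Gaussian moment
   (for l >= 1, since g^l is again a Gaussian, with parameters a^l and l p) or the integrand of
   c_2n (for l = 0, splitting off one factor f).  The remaining power of f is bounded by
   condition (1), and measurable because f r * r is integrable (existence of c_0) and r > 0
   off a single point; integrability then follows by domination. *)

theory Submission
  imports Defs "HOL-Probability.Distributions"
begin

lemma set_integrable_bounded_mult:
  fixes g h :: "'a \<Rightarrow> real"
  assumes g: "set_integrable M A g" and h: "set_borel_measurable M A h"
    and bound: "\<And>x. x \<in> A \<Longrightarrow> \<bar>h x\<bar> \<le> B"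
  shows "set_integrable M A (\<lambda>x. h x * g x)"
proof (rule set_integrable_bound)
  show "set_integrable M A (\<lambda>x. B * g x)"
    using g by (rule set_integrable_mult_right)
  have "(\<lambda>x. indicator A x *\<^sub>R g x) \<in> borel_measurable M"
    using g unfolding set_integrable_def by (rule borel_measurable_integrable)
  moreover have "(\<lambda>x. indicator A x *\<^sub>R (h x * g x))
      = (\<lambda>x. (indicator A x *\<^sub>R h x) * (indicator A x *\<^sub>R g x))"
    by (auto simp: indicator_def)
  ultimately show "set_borel_measurable M A (\<lambda>x. h x * g x)"
    using h unfolding set_borel_measurable_def by simp
  show "AE x in M. x \<in> A \<longrightarrow> norm (h x * g x) \<le> norm (B * g x)"
  proof (intro AE_I2 impI)
    fix x assume "x \<in> A"
    then have "\<bar>h x\<bar> \<le> \<bar>B\<bar>" using bound by fastforce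
    then show "norm (h x * g x) \<le> norm (B * g x)"
      by (simp add: abs_mult mult_right_mono)
  qed
qed

lemma set_borel_measurable_power:
  fixes f :: "'a \<Rightarrow> real"
  assumes A: "A \<in> sets M" and f: "set_borel_measurable M A f"
  shows "set_borel_measurable M A (\<lambda>x. f x ^ n)"
proof -
  have A': "A \<inter> space M \<in> sets M" using A by simp
  have "f \<in> borel_measurable (restrict_space M A)"
    using f unfolding set_borel_measurable_def borel_measurable_restrict_space_iff[OF A'] .
  then have "(\<lambda>x. f x ^ n) \<in> borel_measurable (restrict_space M A)"
    by measurable
  then show ?thesis
    unfolding set_borel_measurable_def borel_measurable_restrict_space_iff[OF A'] .
qed

lemma set_borel_measurable_cancel_power:
  fixes f :: "real \<Rightarrow> real"
  assumes "set_borel_measurable lborel {0..} (\<lambda>r. f r * r ^ m)"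
  shows "set_borel_measurable lborel {0..} f"
proof -
  let ?h = "\<lambda>r. indicator {0..} r *\<^sub>R (f r * r ^ m)"
  have [measurable]: "?h \<in> borel_measurable lborel"
    using assms unfolding set_borel_measurable_def .
  have "(\<lambda>r. indicator {0..} r *\<^sub>R f r)
      = (\<lambda>r. if r = 0 then f 0 else ?h r / r ^ m)"
    by (auto simp: indicator_def fun_eq_iff)
  moreover have "(\<lambda>r. if r = 0 then f 0 else ?h r / r ^ m) \<in> borel_measurable lborel"
    by measurable
  ultimately show ?thesis
    unfolding set_borel_measurable_def by simp
qed

lemma set_integrable_gaussian_moment:
  fixes p :: real
  assumes p: "p > 0"
  shows "set_integrable lborel {0..} (\<lambda>r. exp (- p * r\<^sup>2) * r ^ m)"
proof -
  let ?g = "\<lambda>x::real. indicator {0..} x *\<^sub>R (exp (- x\<^sup>2) * x ^ m)"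
  have "integrable lborel ?g"
  proof (cases "even m")
    case True
    then obtain k where "m = 2 * k" by blast
    then show ?thesis
      using gaussian_moment_even_pos[of k] by (auto simp: has_bochner_integral_iff)
  next
    case False
    then obtain k where "m = 2 * k + 1" by (blast elim: oddE)
    then show ?thesis
      using gaussian_moment_odd_pos[of k] by (auto simp: has_bochner_integral_iff)
  qed
  then have "integrable lborel (\<lambda>x. ?g (0 + sqrt p * x))"
    using p by (intro lborel_integrable_real_affine) auto
  moreover have "?g (0 + sqrt p * x) = sqrt p ^ m * (indicator {0..} x *\<^sub>R (exp (- p * x\<^sup>2) * x ^ m))"
    for x
    using p by (auto simp: indicator_def power_mult_distrib zero_le_mult_iff)
  ultimately show ?thesis
    using p unfolding set_integrable_def by simp
qed

lemma gfun_power: "gfun a p r ^ l = gfun (a ^ l) (real l * p) r"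
  by (simp add: gfun_def power_mult_distrib mult.assoc exp_of_nat_mult[symmetric])

lemma c_exists_set_borel_measurable:
  assumes "c_exists f n"
  shows "set_borel_measurable lborel {0..} f"
  using assms borel_measurable_integrable
  by (intro set_borel_measurable_cancel_power[of f "n + 1"])
    (simp add: c_exists_def set_integrable_def set_borel_measurable_def)

lemma bounded_power_set_integrable_mult:
  fixes f g :: "real \<Rightarrow> real"
  assumes "set_integrable lborel {0..} g" and "set_borel_measurable lborel {0..} f"
    and "\<And>r. r \<ge> 0 \<Longrightarrow> \<bar>f r\<bar> \<le> F"
  shows "set_integrable lborel {0..} (\<lambda>r. f r ^ k * g r)"
proof (rule set_integrable_bounded_mult)
  show "set_borel_measurable lborel {0..} (\<lambda>r. f r ^ k)"
    using assms(2) by (simp add: set_borel_measurable_power)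
  show "\<bar>f r ^ k\<bar> \<le> F ^ k" if "r \<in> {0..}" for r
    using assms(3)[of r] that by (simp add: power_abs power_mono)
qed fact

lemma I_exists_gaussian_weight:
  assumes "p > 0" and "l \<ge> 1" and "set_borel_measurable lborel {0..} f"
    and "\<And>r. r \<ge> 0 \<Longrightarrow> \<bar>f r\<bar> \<le> F"
  shows "I_exists f a p n k l"
proof -
  have "set_integrable lborel {0..} (\<lambda>r. exp (- (real l * p) * r\<^sup>2) * r ^ (2 * n + 1))"
    using assms(1,2) by (intro set_integrable_gaussian_moment) simp
  then have "set_integrable lborel {0..}
      (\<lambda>r. f r ^ k * (a ^ l * (exp (- (real l * p) * r\<^sup>2) * r ^ (2 * n + 1))))"
    using assms(3,4) by (intro bounded_power_set_integrable_mult set_integrable_mult_right)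
  then show ?thesis
    unfolding I_exists_def gfun_power by (simp add: gfun_def mult.assoc)
qed

lemma I_exists_without_gaussian:
  assumes "c_exists f (2 * n)" and "\<And>r. r \<ge> 0 \<Longrightarrow> \<bar>f r\<bar> \<le> F"
  shows "I_exists f a p n (Suc k) 0"
proof -
  have "set_integrable lborel {0..} (\<lambda>r. f r ^ k * (f r * r ^ (2 * n + 1)))"
    using assms c_exists_set_borel_measurable[OF assms(1)] unfolding c_exists_def
    by (intro bounded_power_set_integrable_mult)
  then show ?thesis
    by (simp add: I_exists_def mult_ac)
qed

theorem lemma3:
  fixes f :: "real \<Rightarrow> real" and a p :: real
  assumes "a > 0" and "p > 0" and "cond1 f"
  shows "(\<forall>n k l. l \<ge> 1 \<longrightarrow> I_exists f a p n k l)
    \<and> (\<forall>n. c_exists f (2 * n) \<longrightarrow> (\<forall>k. k \<ge> 1 \<longrightarrow> I_exists f a p n k 0))"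
proof -
  obtain F where F: "\<And>r. r \<ge> 0 \<Longrightarrow> 0 \<le> f r \<and> f r \<le> F" and c0: "c_exists f 0"
    using \<open>cond1 f\<close> unfolding cond1_def by blast
  have f_meas: "set_borel_measurable lborel {0..} f"
    using c0 by (rule c_exists_set_borel_measurable)
  have f_bound: "\<bar>f r\<bar> \<le> F" if "r \<ge> 0" for r
    using F[OF that] by simp
  show ?thesis
  proof (intro conjI allI impI)
    fix n k l :: nat
    assume "l \<ge> 1"
    with \<open>p > 0\<close> f_meas f_bound show "I_exists f a p n k l"
      by (intro I_exists_gaussian_weight)
  next
    fix n k :: nat
    assume "c_exists f (2 * n)" and "k \<ge> 1"
    then obtain j where "k = Suc j"
      using Suc_le_D by force
    with \<open>c_exists f (2 * n)\<close> f_bound show "I_exists f a p n k 0"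
      by (simp add: I_exists_without_gaussian[of f n F])
  qed
qed

end
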